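(* Let $U\subset\mathbb{C}\setminus\{0\}$ be a connected domain on which an analytic branch of $\ln x$ is fixed, and write $x^{c}=e^{c\ln x}$ for $c\in\mathbb{C}$. Let $f_1,f_2$ be holomorphic and nowhere vanishing on $U$. Then $(f_1,f_2)$ is a nondegenerate period-$2$ orbit of $\mathcal{A}$ (i.e. $\mathcal{A}[f_1]=f_2$, $\mathcal{A}[f_2]=f_1$ and $f_1\not\equiv f_2$) if and only if there exist constants $a,c\in\mathbb{C}\setminus\{0\}$ with $1-ax^{c}\neq 0$ on $U$ such that \[ f_1(x)=\frac{c\,a\,x^{c}}{1-ax^{c}},\qquad f_2(x)=\frac{c}{1-ax^{c}}\qquad (x\in U). \] Moreover, the ordering of the pair is irrelevant: the unordered set $\{f_1,f_2\}$ represents a single $2$-cycle of $\mathcal{A}$.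
   Context: For a complex-differentiable, nowhere-vanishing function $f$ on a domain $U\subset\mathbb{C}\setminus\{0\}$, the dual logarithmic derivative operator is $\mathcal{A}[f](x)=\dfrac{\mathrm{d}\ln f(x)}{\mathrm{d}\ln x}=\dfrac{x f'(x)}{f(x)}$ (for fixed analytic branches of the logarithms). A pair $(f_1,f_2)$ of holomorphic nowhere-vanishing functions on $U$ is a period-$2$ orbit of $\mathcal{A}$ if $\mathcal{A}[f_1]=f_2$ and $\mathcal{A}[f_2]=f_1$; it is nondegenerate if $f_1\not\equiv f_2$. *)

theory Defs
  imports "HOL-Complex_Analysis.Complex_Analysis"
begin

definition log_branch :: "(complex \<Rightarrow> complex) \<Rightarrow> complex set \<Rightarrow> bool" where
  "log_branch L U \<longleftrightarrow> L holomorphic_on U \<and> (\<forall>x\<in>U. exp (L x) = x)"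

definition bpow :: "(complex \<Rightarrow> complex) \<Rightarrow> complex \<Rightarrow> complex \<Rightarrow> complex" where
  "bpow L x c = exp (c * L x)"

text \<open>Dual logarithmic derivative A[f](x) = x f'(x) / f(x).\<close>
definition dual_log_deriv :: "(complex \<Rightarrow> complex) \<Rightarrow> complex \<Rightarrow> complex" where
  "dual_log_deriv f x = x * deriv f x / f x"

definition nondeg_period2_orbit :: "complex set \<Rightarrow> (complex \<Rightarrow> complex) \<Rightarrow> (complex \<Rightarrow> complex) \<Rightarrow> bool" where
  "nondeg_period2_orbit U f1 f2 \<longleftrightarrow>
     (\<forall>x\<in>U. dual_log_deriv f1 x = f2 x) \<and> (\<forall>x\<in>U. dual_log_deriv f2 x = f1 x) \<and>
     (\<exists>x\<in>U. f1 x \<noteq> f2 x)"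

end

theory Submission
  imports Defs
begin

text \<open>
  The orbit equations say x f1' = f1 f2 = x f2', so f2 - f1 is a constant c, which is nonzero by
  nondegeneracy, and f2 solves the Bernoulli equation x f' = f (f - c). Along a nowhere vanishing
  solution, (1 - c / f) x^(-c) has derivative zero, so f (1 - a x^c) = c for a constant a;
  conversely every such f solves the equation. Finally f1 = f2 - c.
\<close>

definition bernoulli_ode :: "complex set \<Rightarrow> complex \<Rightarrow> (complex \<Rightarrow> complex) \<Rightarrow> bool" where
  "bernoulli_ode U c f \<longleftrightarrow> (\<forall>x\<in>U. x * deriv f x = f x * (f x - c))"

lemma log_branch_nonzero:
  assumes "log_branch L U" "x \<in> U"
  shows "x \<noteq> 0"
  using assms exp_not_eq_zero unfolding log_branch_def by metis

lemma has_field_derivative_log_branch: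
  assumes "log_branch L U" "open U" "x \<in> U"
  shows "(L has_field_derivative 1 / x) (at x)"
proof -
  have L: "(L has_field_derivative deriv L x) (at x)"
    using assms holomorphic_derivI unfolding log_branch_def by blast
  have "((\<lambda>y. exp (L y)) has_field_derivative exp (L x) * deriv L x) (at x)"
    using DERIV_chain2[OF DERIV_exp L] .
  moreover have "((\<lambda>y. exp (L y)) has_field_derivative 1) (at x)"
    by (rule has_field_derivative_transform_within_open[OF DERIV_ident assms(2,3)])
      (use assms(1) in \<open>simp add: log_branch_def\<close>)
  ultimately have "x * deriv L x = 1"
    using DERIV_unique assms(1,3) unfolding log_branch_def by fastforce
  then show ?thesis
    using L by (metis eq_divide_eq mult.commute mult_zero_left zero_neq_one)
qed

lemma has_field_derivative_bpow:
  assumes "log_branch L U" "open U" "x \<in> U"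
  shows "((\<lambda>y. bpow L y c) has_field_derivative c * bpow L x c / x) (at x)"
  using DERIV_chain2[OF DERIV_exp DERIV_cmult[OF has_field_derivative_log_branch[OF assms]]]
  unfolding bpow_def by (simp add: mult.commute)

lemma bpow_add: "bpow L x (b + c) = bpow L x b * bpow L x c"
  unfolding bpow_def by (simp add: distrib_right exp_add)

lemma bernoulli_ode_imp_closed_form:
  assumes "open U" "connected U" "log_branch L U"
    and "f holomorphic_on U" "\<forall>x\<in>U. f x \<noteq> 0" "bernoulli_ode U c f"
  obtains a where "\<And>x. x \<in> U \<Longrightarrow> f x * (1 - a * bpow L x c) = c"
proof -
  define h where "h x = bpow L x (- c) * (1 - c / f x)" for x
  have "h constant_on U"
  proof (rule has_field_derivative_0_imp_constant_on[OF _ assms(2,1)])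
    fix x assume x: "x \<in> U"
    have ode: "x * deriv f x = f x * (f x - c)" and "x \<noteq> 0" "f x \<noteq> 0"
      using assms(3,5,6) x log_branch_nonzero unfolding bernoulli_ode_def by auto
    have f: "(f has_field_derivative deriv f x) (at x)"
      using holomorphic_derivI[OF assms(4,1) x] .
    have "(h has_field_derivative
        - c * bpow L x (- c) / x * (1 - c / f x) + c * deriv f x / (f x * f x) * bpow L x (- c)) (at x)"
      (is "(h has_field_derivative ?h') _")
      unfolding h_def
      using DERIV_mult[OF has_field_derivative_bpow[OF assms(3,1) x, where c = "- c"]
          DERIV_diff[OF DERIV_const DERIV_divide[OF DERIV_const f]]] \<open>f x \<noteq> 0\<close>
      by simp
    moreover have "?h' = c * bpow L x (- c) / (x * f x * f x) * (x * deriv f x - f x * (f x - c))"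
      using \<open>x \<noteq> 0\<close> \<open>f x \<noteq> 0\<close> by (simp add: field_simps)
    ultimately show "(h has_field_derivative 0) (at x)"
      by (simp add: ode)
  qed
  then obtain a where a: "\<And>x. x \<in> U \<Longrightarrow> h x = a"
    unfolding constant_on_def by blast
  show thesis
  proof (rule that)
    fix x assume x: "x \<in> U"
    have "a * bpow L x c = bpow L x (- c + c) * (1 - c / f x)"
      unfolding a[OF x, symmetric] h_def bpow_add by simp
    then show "f x * (1 - a * bpow L x c) = c"
      using assms(5) x by (simp add: bpow_def field_simps)
  qed
qed

lemma closed_form_imp_bernoulli_ode:
  assumes "open U" "log_branch L U" "c \<noteq> 0"
    and closed: "\<forall>x\<in>U. f x * (1 - a * bpow L x c) = c"
  shows "bernoulli_ode U c f"
  unfolding bernoulli_ode_def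
proof
  fix x assume x: "x \<in> U"
  have den: "1 - a * bpow L y c \<noteq> 0" if "y \<in> U" for y
    using closed that \<open>c \<noteq> 0\<close> by force
  have f_eq: "f y = c / (1 - a * bpow L y c)" if "y \<in> U" for y
    using closed that den[OF that] by (simp add: eq_divide_eq)
  have "((\<lambda>y. c / (1 - a * bpow L y c)) has_field_derivative
      c * (a * (c * bpow L x c / x)) / ((1 - a * bpow L x c) * (1 - a * bpow L x c))) (at x)"
    using DERIV_divide[OF DERIV_const DERIV_diff[OF DERIV_const
        DERIV_cmult[OF has_field_derivative_bpow[OF assms(2,1) x]]]] den[OF x]
    by simp
  then have "(f has_field_derivative
      c * (a * (c * bpow L x c / x)) / ((1 - a * bpow L x c) * (1 - a * bpow L x c))) (at x)"
    by (rule has_field_derivative_transform_within_open[OF _ assms(1) x]) (simp add: f_eq)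
  then have "x * deriv f x = c * (a * (c * bpow L x c)) / ((1 - a * bpow L x c) * (1 - a * bpow L x c))"
    using log_branch_nonzero[OF assms(2) x] by (simp add: DERIV_imp_deriv)
  also have "\<dots> = f x * (f x - c)"
    using den[OF x] by (simp add: f_eq[OF x] field_simps)
  finally show "x * deriv f x = f x * (f x - c)" .
qed

lemma bernoulli_ode_iff_closed_form:
  assumes "open U" "connected U" "log_branch L U"
    and "f holomorphic_on U" "\<forall>x\<in>U. f x \<noteq> 0" "c \<noteq> 0"
  shows "bernoulli_ode U c f \<longleftrightarrow> (\<exists>a. \<forall>x\<in>U. f x * (1 - a * bpow L x c) = c)"
  using bernoulli_ode_imp_closed_form[OF assms(1-5)] closed_form_imp_bernoulli_ode[OF assms(1,3,6)]
  by metis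

lemma dual_log_deriv_eq_iff:
  assumes "f x \<noteq> 0"
  shows "dual_log_deriv f x = y \<longleftrightarrow> x * deriv f x = f x * y"
  using assms unfolding dual_log_deriv_def by (auto simp: field_simps)

lemma nondeg_period2_orbit_iff_bernoulli_ode:
  assumes "open U" "connected U" "U \<noteq> {}" "0 \<notin> U"
    and "f1 holomorphic_on U" "f2 holomorphic_on U"
    and "\<forall>x\<in>U. f1 x \<noteq> 0" "\<forall>x\<in>U. f2 x \<noteq> 0"
  shows "nondeg_period2_orbit U f1 f2 \<longleftrightarrow>
    (\<exists>c. c \<noteq> 0 \<and> (\<forall>x\<in>U. f1 x = f2 x - c) \<and> bernoulli_ode U c f2)"
proof
  assume orbit: "nondeg_period2_orbit U f1 f2"
  have ode1: "x * deriv f1 x = f1 x * f2 x" and ode2: "x * deriv f2 x = f1 x * f2 x"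
    if "x \<in> U" for x
    using orbit that assms(7,8)
    by (auto simp: nondeg_period2_orbit_def dual_log_deriv_eq_iff mult.commute)
  have "(\<lambda>x. f2 x - f1 x) constant_on U"
  proof (rule has_field_derivative_0_imp_constant_on[OF _ assms(2,1)])
    fix x assume x: "x \<in> U"
    have "deriv f1 x = deriv f2 x"
      using ode1[OF x] ode2[OF x] x assms(4) by (metis mult_cancel_left)
    then show "((\<lambda>x. f2 x - f1 x) has_field_derivative 0) (at x)"
      using DERIV_diff[OF holomorphic_derivI[OF assms(6,1) x] holomorphic_derivI[OF assms(5,1) x]]
      by simp
  qed
  then obtain c where c: "\<And>x. x \<in> U \<Longrightarrow> f2 x - f1 x = c"
    unfolding constant_on_def by blast
  have "c \<noteq> 0"
    using orbit c unfolding nondeg_period2_orbit_def by fastforce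
  moreover have "\<forall>x\<in>U. f1 x = f2 x - c"
    using c by (simp add: algebra_simps)
  moreover have "bernoulli_ode U c f2"
    unfolding bernoulli_ode_def using ode2 c by (simp add: algebra_simps)
  ultimately show "\<exists>c. c \<noteq> 0 \<and> (\<forall>x\<in>U. f1 x = f2 x - c) \<and> bernoulli_ode U c f2"
    by blast
next
  assume "\<exists>c. c \<noteq> 0 \<and> (\<forall>x\<in>U. f1 x = f2 x - c) \<and> bernoulli_ode U c f2"
  then obtain c where "c \<noteq> 0" and shift: "\<forall>x\<in>U. f1 x = f2 x - c"
    and ode: "bernoulli_ode U c f2"
    by blast
  have "deriv f1 x = deriv f2 x" if x: "x \<in> U" for x
  proof -
    have "(f1 has_field_derivative deriv f2 x) (at x)"
      using DERIV_diff[OF holomorphic_derivI[OF assms(6,1) x] DERIV_const[of c]]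
      by (rule_tac has_field_derivative_transform_within_open[OF _ assms(1) x]) (simp_all add: shift)
    then show ?thesis by (rule DERIV_imp_deriv)
  qed
  then have "x * deriv f1 x = f1 x * f2 x" "x * deriv f2 x = f2 x * f1 x" if "x \<in> U" for x
    using ode shift that unfolding bernoulli_ode_def by auto
  moreover obtain x0 where "x0 \<in> U"
    using assms(3) by blast
  ultimately show "nondeg_period2_orbit U f1 f2"
    using assms(7,8) shift \<open>c \<noteq> 0\<close>
    unfolding nondeg_period2_orbit_def by (auto simp: dual_log_deriv_eq_iff)
qed

lemma shift_and_product_iff_fractions:
  fixes u v c E :: "'a::field"
  assumes "c \<noteq> 0"
  shows "(u = v - c \<and> v * (1 - E) = c) \<longleftrightarrow>
    (1 - E \<noteq> 0 \<and> u = c * E / (1 - E) \<and> v = c / (1 - E))"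
proof (cases "1 - E = 0")
  case False
  then have "v * (1 - E) = c \<longleftrightarrow> v = c / (1 - E)"
    by (simp add: eq_divide_eq)
  moreover have "c / (1 - E) - c = c * E / (1 - E)"
    using False by (simp add: field_simps)
  ultimately show ?thesis
    using False by auto
qed (use assms in simp)

theorem theorem4p2:
  fixes U :: "complex set" and L f1 f2 :: "complex \<Rightarrow> complex"
  assumes "open U" and "connected U" and "U \<noteq> {}" and "0 \<notin> U"
    and "log_branch L U"
    and "f1 holomorphic_on U" and "f2 holomorphic_on U"
    and "\<forall>x\<in>U. f1 x \<noteq> 0" and "\<forall>x\<in>U. f2 x \<noteq> 0"
  shows "nondeg_period2_orbit U f1 f2 \<longleftrightarrow>
    (\<exists>a c. a \<noteq> 0 \<and> c \<noteq> 0 \<and> (\<forall>x\<in>U. 1 - a * bpow L x c \<noteq> 0) \<and>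
       (\<forall>x\<in>U. f1 x = c * a * bpow L x c / (1 - a * bpow L x c) \<and>
               f2 x = c / (1 - a * bpow L x c)))"
proof -
  have "nondeg_period2_orbit U f1 f2 \<longleftrightarrow>
      (\<exists>c. c \<noteq> 0 \<and> (\<forall>x\<in>U. f1 x = f2 x - c) \<and> bernoulli_ode U c f2)"
    using nondeg_period2_orbit_iff_bernoulli_ode assms by blast
  also have "\<dots> \<longleftrightarrow> (\<exists>a c. c \<noteq> 0 \<and> (\<forall>x\<in>U. f1 x = f2 x - c \<and> f2 x * (1 - a * bpow L x c) = c))"
    using bernoulli_ode_iff_closed_form[OF assms(1,2,5,7,9)] by blast
  also have "\<dots> \<longleftrightarrow> (\<exists>a c. c \<noteq> 0 \<and> (\<forall>x\<in>U. 1 - a * bpow L x c \<noteq> 0 \<and>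
      f1 x = c * a * bpow L x c / (1 - a * bpow L x c) \<and> f2 x = c / (1 - a * bpow L x c)))"
    \<comment> \<open>conj_cong puts c \<noteq> 0 in context for the premise of the rewrite rule\<close>
    by (simp only: mult.assoc shift_and_product_iff_fractions not_False_eq_True cong: conj_cong)
  also have "\<dots> \<longleftrightarrow> (\<exists>a c. a \<noteq> 0 \<and> c \<noteq> 0 \<and> (\<forall>x\<in>U. 1 - a * bpow L x c \<noteq> 0) \<and>
      (\<forall>x\<in>U. f1 x = c * a * bpow L x c / (1 - a * bpow L x c) \<and> f2 x = c / (1 - a * bpow L x c)))"
  proof -
    have "a \<noteq> 0" if "\<forall>x\<in>U. f1 x = c * a * bpow L x c / (1 - a * bpow L x c)" for a c
      using that assms(3,8) by fastforce
    then show ?thesis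
      by (intro iffI; elim exE conjE; blast)
  qed
  finally show ?thesis .
qed

end
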